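(* Let $a<0$, $b<0$, $c>0$, $d<0$ with $a+bd>0$, consider $$Z_0=\begin{cases}X=(a,0,b(y+x^2)) & z\ge0,\\ Y=(c,d,x)& z\le0,\end{cases}$$ let $\Sigma^{c+}=\{(x,y,0)\,:\,x>0,\ y<-x^2\}$, $\Sigma^s=\{(x,y,0)\,:\,x>0,\ y>-x^2\}$, and let $\varphi$ be the first return map $$\varphi(x,y)=\left(\frac{ax-\sqrt{-3a^2(x^2+4y)}}{2a},\ y+\frac{d\big(ax-\sqrt{-3a^2(x^2+4y)}\big)}{ac}\right).$$ Given $p_0=(x_0,y_0,0)\in\overline{\Sigma^{c+}}\setminus\{0\}$, let $p_1=(x_1,y_1,0)=\varphi(p_0)$ and $p_n=(x_n,y_n,0)=\varphi^n(p_0)$ whenever defined (the map being iterated only while the iterates remain in $\overline{\Sigma^{c+}}$). Then $x_1>x_0$, and if $p_n$ is defined for all $n$ then $x_n\to\infty$ as $n\to\infty$.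
   Context: $\Sigma=\{z=0\}$. The first return map $\varphi$ sends a point $p$ of $\Sigma$ to the point obtained by following the trajectory of $X$ from $p$ until it returns to $\Sigma$, and then following the trajectory of $Y$ from there until it returns to $\Sigma$; it is not iterated on points of $\overline{\Sigma^s}$. For $x\ge0$, $y\le -x^2$ the formula gives $x_1=\frac{x_0+\sqrt{3}\sqrt{-(x_0^2+4y_0)}}{2}$. *)

theory Defs
  imports "HOL-Analysis.Analysis"
begin

(* Points (x,y,0) of Sigma = {z=0} are identified with pairs (x,y) :: real \<times> real. *)

definition Sigma_cplus :: "(real \<times> real) set" where
  "Sigma_cplus = {(x, y). x > 0 \<and> y < - (x^2)}"

definition Sigma_s :: "(real \<times> real) set" where
  "Sigma_s = {(x, y). x > 0 \<and> y > - (x^2)}"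

definition first_return :: "real \<Rightarrow> real \<Rightarrow> real \<Rightarrow> real \<times> real \<Rightarrow> real \<times> real" where
  "first_return a c d p = (case p of (x, y) \<Rightarrow>
     ((a * x - sqrt (- 3 * a^2 * (x^2 + 4 * y))) / (2 * a),
      y + d * (a * x - sqrt (- 3 * a^2 * (x^2 + 4 * y))) / (a * c)))"

end

theory Submission
  imports Defs
begin

text \<open>For \<open>a < 0\<close> the first coordinate of the return point is \<open>(x + \<surd>(-3(x\<^sup>2 + 4y)))/2\<close>.
  On the closure of \<open>\<Sigma>\<^sup>c\<^sup>+\<close> we have \<open>-3(x\<^sup>2 + 4y) \<ge> 9x\<^sup>2\<close>, so the square root is at least \<open>3x\<close>
  and each return at least doubles \<open>x\<close>; it is moreover positive away from the origin.
  Along a full orbit the \<open>x\<close>-coordinates therefore grow at least linearly.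
  Only \<open>a < 0\<close> is needed: the remaining sign conditions on \<open>b, c, d\<close> shape the flow of \<open>Z\<^sub>0\<close>,
  not the explicit formula for \<open>\<phi>\<close>.\<close>

lemma closure_Sigma_cplus_subset:
  "closure Sigma_cplus \<subseteq> {(x, y). 0 \<le> x \<and> y \<le> - (x^2)}"
proof (rule closure_minimal)
  show "Sigma_cplus \<subseteq> {(x, y). 0 \<le> x \<and> y \<le> - (x^2)}"
    by (auto simp: Sigma_cplus_def)
  have "closed {p :: real \<times> real. 0 \<le> fst p \<and> snd p \<le> - ((fst p)^2)}"
    by (intro closed_Collect_conj closed_Collect_le continuous_intros)
  then show "closed {(x :: real, y). 0 \<le> x \<and> y \<le> - (x^2)}"
    by (simp add: case_prod_beta')
qed

lemma fst_first_return:
  assumes "a < 0"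
  shows "fst (first_return a c d (x, y)) = (x + sqrt (- 3 * (x^2 + 4 * y))) / 2"
proof -
  have "sqrt (- 3 * a^2 * (x^2 + 4 * y)) = sqrt (a^2 * (- 3 * (x^2 + 4 * y)))"
    by (rule arg_cong[where f = sqrt]) algebra
  also have "\<dots> = sqrt (a^2) * sqrt (- 3 * (x^2 + 4 * y))"
    by (rule real_sqrt_mult)
  also have "\<dots> = - a * sqrt (- 3 * (x^2 + 4 * y))"
    using assms by simp
  finally show ?thesis
    using assms by (simp add: first_return_def field_simps)
qed

lemma fst_first_return_ge_double:
  assumes "a < 0" and "(x, y) \<in> closure Sigma_cplus" and "(x, y) \<noteq> (0, 0)"
  shows "2 * x \<le> fst (first_return a c d (x, y)) \<and> 0 < fst (first_return a c d (x, y))"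
proof -
  define s where "s = sqrt (- 3 * (x^2 + 4 * y))"
  have x: "0 \<le> x" and y: "y \<le> - (x^2)"
    using assms(2) closure_Sigma_cplus_subset by auto
  have "y < 0"
  proof (cases "x = 0")
    case True
    then show ?thesis
      using y assms(3) by simp
  next
    case False
    then show ?thesis
      using x y by (smt (verit) zero_less_power2)
  qed
  have "sqrt (9 * x^2) \<le> s"
    unfolding s_def using y by (intro real_sqrt_le_mono) simp
  moreover have "sqrt (9 * x^2) = 3 * x"
    using x by (simp add: real_sqrt_mult)
  moreover have "0 < s"
    unfolding s_def using y \<open>y < 0\<close> by (intro real_sqrt_gt_zero) (simp add: ring_distribs)
  ultimately show ?thesis
    unfolding fst_first_return[OF assms(1)] s_def[symmetric] using x by simp
qed

lemma doubling_sequence_at_top: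
  fixes u :: "nat \<Rightarrow> real"
  assumes "0 < u 0" and "\<And>n. 2 * u n \<le> u (Suc n)"
  shows "filterlim u at_top sequentially"
proof -
  have linear: "u 0 * real (Suc n) \<le> u n" for n
  proof (induction n)
    case (Suc n)
    have "u 0 \<le> u 0 * real (Suc n)"
      using assms(1) by simp
    then have "u 0 * real (Suc (Suc n)) \<le> 2 * u n"
      using Suc.IH by (simp add: algebra_simps)
    also have "\<dots> \<le> u (Suc n)"
      by (rule assms(2))
    finally show ?case .
  qed simp
  have "filterlim (\<lambda>n. u 0 * real n) at_top sequentially"
    by (rule filterlim_tendsto_pos_mult_at_top[OF tendsto_const assms(1) filterlim_real_sequentially])
  then have "filterlim (\<lambda>n. u 0 * real (Suc n)) at_top sequentially"
    by (rule filterlim_sequentially_Suc[THEN iffD2])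
  then show ?thesis
    by (rule filterlim_at_top_mono) (use linear in simp)
qed

lemma funpow_orbit_at_top:
  fixes F :: "'a \<Rightarrow> 'a" and g :: "'a \<Rightarrow> real"
  assumes doubling: "\<And>p. p \<in> S \<Longrightarrow> 0 < g p \<Longrightarrow> 2 * g p \<le> g (F p)"
    and "0 < g (F p0)" and orbit: "\<And>n. (F ^^ n) p0 \<in> S"
  shows "filterlim (\<lambda>n. g ((F ^^ n) p0)) at_top sequentially"
proof -
  define u where "u n = g ((F ^^ Suc n) p0)" for n
  have u_Suc: "u (Suc n) = g (F ((F ^^ Suc n) p0))" for n
    by (simp add: u_def)
  have u_step: "2 * u n \<le> u (Suc n)" if "0 < u n" for n
    using doubling[OF orbit, of "Suc n"] that unfolding u_Suc by (simp only: u_def)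
  have pos: "0 < u n" for n
  proof (induction n)
    case 0
    show ?case
      using \<open>0 < g (F p0)\<close> by (simp add: u_def)
  next
    case (Suc n)
    show ?case
      using u_step[OF Suc.IH] Suc.IH by linarith
  qed
  have "filterlim u at_top sequentially"
    using doubling_sequence_at_top pos u_step by blast
  then show ?thesis
    unfolding u_def by (rule filterlim_sequentially_Suc[THEN iffD1])
qed

theorem mainTheorem6:
  fixes a b c d :: real and p0 :: "real \<times> real"
  assumes "a < 0" "b < 0" "c > 0" "d < 0" "a + b * d > 0"
    and "p0 \<in> closure Sigma_cplus - {(0, 0)}"
  shows "fst (first_return a c d p0) > fst p0 \<and>
         ((\<forall>n. (first_return a c d ^^ n) p0 \<in> closure Sigma_cplus) \<longrightarrow>
           filterlim (\<lambda>n. fst ((first_return a c d ^^ n) p0)) at_top sequentially)"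
proof -
  have step: "2 * fst p \<le> fst (first_return a c d p) \<and> 0 < fst (first_return a c d p)"
    if "p \<in> closure Sigma_cplus" and "p \<noteq> (0, 0)" for p
    using fst_first_return_ge_double[OF assms(1)] that by (cases p) simp
  have first: "2 * fst p0 \<le> fst (first_return a c d p0) \<and> 0 < fst (first_return a c d p0)"
    using step assms(6) by blast
  have "filterlim (\<lambda>n. fst ((first_return a c d ^^ n) p0)) at_top sequentially"
    if orbit: "\<forall>n. (first_return a c d ^^ n) p0 \<in> closure Sigma_cplus"
  proof (rule funpow_orbit_at_top[where S = "closure Sigma_cplus"])
    fix p :: "real \<times> real"
    assume "p \<in> closure Sigma_cplus" and "0 < fst p"
    then show "2 * fst p \<le> fst (first_return a c d p)"
      using step by (metis fst_conv less_irrefl)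
  qed (use first orbit in auto)
  with first show ?thesis
    by auto
qed

end
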